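(* For a topological monoid $S$ with unit $e$, the following are equivalent: (1) the quasi-uniformity $\mathcal L\wedge\mathcal R$ generates the topology of $S$; (2) $e$ is an open unit of $S$; (3) $S$ has open central shifts. Moreover, conditions (1)–(3) imply (4): the quasi-uniformity $\mathcal L\wedge\mathcal R$ is rotund.
   Context: A topological monoid is a topological space with a continuous associative multiplication having a unit $e$. Let $\mathcal N_e$ be a neighborhood base at $e$. $\mathcal L\wedge\mathcal R$ is the quasi-uniformity on $S$ generated by the base $\{\{(x,y)\in S\times S:y\in UxV\}:U,V\in\mathcal N_e\}$; it generates the topology of $S$ if the topology $\{W: \forall x\in W\ \exists E\in\mathcal L\wedge\mathcal R,\ \{y:(x,y)\in E\}\subset W\}$ equals the given topology. $e$ is an open unit if $UxU$ is a neighborhood of $x$ for every neighborhood $U$ of $e$ and every $x\in S$. $S$ has open central shifts if for each $a\in S$ the map $S\times S\to S$, $(x,y)\mapsto xay$, is open. For an entourage $E$ let $B(x;E)=\{y:(x,y)\in E\}$, $B(A;E)=\bigcup_{a\in A}B(a;E)$, $E\circ F=\{(x,z):\exists y\,((x,y)\in E,(y,z)\in F)\}$. A quasi-uniformity is rotund if it has a base closed under $\circ$ which is rotund: $B(\overline A;U)\subset\overline{B(A;W\circ U)}$ for all $A\subset S$ and all $U,W$ in the base (closures in the topology of $S$). *)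

theory Defs
  imports "HOL-Analysis.Analysis"
begin

text \<open>A topological monoid is modelled by the type class topological_monoid_mult
  (a topological space with a jointly continuous associative multiplication with unit 1).\<close>

definition unit_nhds :: "'a::topological_monoid_mult set set" where
  "unit_nhds = {U. \<exists>G. open G \<and> 1 \<in> G \<and> G \<subseteq> U}"

definition tri_prod :: "'a::monoid_mult set \<Rightarrow> 'a \<Rightarrow> 'a set \<Rightarrow> 'a set" where
  "tri_prod U x V = {u * x * v | u v. u \<in> U \<and> v \<in> V}"

definition LR_entourage :: "'a::monoid_mult set \<Rightarrow> 'a set \<Rightarrow> ('a \<times> 'a) set" where
  "LR_entourage U V = {(x, y). y \<in> tri_prod U x V}"

definition LR_base :: "('a::topological_monoid_mult \<times> 'a) set set" where
  "LR_base = {LR_entourage U V | U V. U \<in> unit_nhds \<and> V \<in> unit_nhds}"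

definition LR :: "('a::topological_monoid_mult \<times> 'a) set set" where
  "LR = {E. \<exists>B\<in>LR_base. B \<subseteq> E}"

definition ball_q :: "'a \<Rightarrow> ('a \<times> 'a) set \<Rightarrow> 'a set" where
  "ball_q x E = {y. (x, y) \<in> E}"

definition ball_set_q :: "'a set \<Rightarrow> ('a \<times> 'a) set \<Rightarrow> 'a set" where
  "ball_set_q A E = (\<Union>a\<in>A. ball_q a E)"

definition ent_comp :: "('a \<times> 'a) set \<Rightarrow> ('a \<times> 'a) set \<Rightarrow> ('a \<times> 'a) set" where
  "ent_comp E F = {(x, z). \<exists>y. (x, y) \<in> E \<and> (y, z) \<in> F}"

definition qu_topology :: "('a \<times> 'a) set set \<Rightarrow> 'a set set" where
  "qu_topology Q = {W. \<forall>x\<in>W. \<exists>E\<in>Q. ball_q x E \<subseteq> W}"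

definition qu_generates_topology :: "('a::topological_space \<times> 'a) set set \<Rightarrow> bool" where
  "qu_generates_topology Q \<longleftrightarrow> qu_topology Q = {W. open W}"

definition is_nhd :: "'a::topological_space set \<Rightarrow> 'a \<Rightarrow> bool" where
  "is_nhd N x \<longleftrightarrow> (\<exists>G. open G \<and> x \<in> G \<and> G \<subseteq> N)"

definition open_unit :: "'a::topological_monoid_mult itself \<Rightarrow> bool" where
  "open_unit _ \<longleftrightarrow> (\<forall>U\<in>(unit_nhds :: 'a set set). \<forall>x::'a. is_nhd (tri_prod U x U) x)"

definition open_central_shifts :: "'a::topological_monoid_mult itself \<Rightarrow> bool" where
  "open_central_shifts _ \<longleftrightarrow>
     (\<forall>a::'a. \<forall>W::('a \<times> 'a) set. open W \<longrightarrow> open ((\<lambda>(x, y). x * a * y) ` W))"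

definition rotund_base :: "('a::topological_space \<times> 'a) set set \<Rightarrow> bool" where
  "rotund_base \<B> \<longleftrightarrow>
     (\<forall>E\<in>\<B>. \<forall>F\<in>\<B>. ent_comp E F \<in> \<B>) \<and>
     (\<forall>A. \<forall>U\<in>\<B>. \<forall>W\<in>\<B>. ball_set_q (closure A) U \<subseteq> closure (ball_set_q A (ent_comp W U)))"

definition is_qu_base :: "('a \<times> 'a) set set \<Rightarrow> ('a \<times> 'a) set set \<Rightarrow> bool" where
  "is_qu_base \<B> Q \<longleftrightarrow> \<B> \<subseteq> Q \<and> (\<forall>E\<in>Q. \<exists>B\<in>\<B>. B \<subseteq> E)"

definition rotund :: "('a::topological_space \<times> 'a) set set \<Rightarrow> bool" where
  "rotund Q \<longleftrightarrow> (\<exists>\<B>. is_qu_base \<B> Q \<and> rotund_base \<B>)"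

end

theory Submission
  imports Defs
begin

text \<open>The ball of x for the basic entourage given by U and V is U x V, and the sets U x U with U
  open are always open for the topology of the quasi-uniformity; so (1) says exactly that they are
  neighbourhoods of x, which is (2). The set U x V is the image of U \<times> V under the central shift
  through x, giving (3) \<Longrightarrow> (2). Conversely, if W is a neighbourhood of (x, y), continuity of
  multiplication yields an open U \<ni> 1 with U x \<times> y U \<subseteq> W, so the image of W under the shift
  through a contains U (x a y) U, a neighbourhood of x a y by (2). Rotundity holds in every
  topological monoid: basic entourages compose as (U, V) ; (U', V') = (U' U, V V'), and the
  continuous map t \<mapsto> u t v carries the closure of A into the closure of u A v.\<close>

lemma unit_nhdsI: "open G \<Longrightarrow> (1::'a::topological_monoid_mult) \<in> G \<Longrightarrow> G \<in> unit_nhds"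
  unfolding unit_nhds_def by blast

lemma unit_nhdsE:
  assumes "U \<in> unit_nhds"
  obtains G where "open G" "(1::'a::topological_monoid_mult) \<in> G" "G \<subseteq> U"
  using assms unfolding unit_nhds_def by blast

lemma one_in_unit_nhds: "U \<in> unit_nhds \<Longrightarrow> (1::'a::topological_monoid_mult) \<in> U"
  by (erule unit_nhdsE) blast

lemma unit_nhds_times:
  fixes U V :: "'a::topological_monoid_mult set"
  assumes "U \<in> unit_nhds" "V \<in> unit_nhds"
  shows "U * V \<in> unit_nhds"
proof -
  obtain G where G: "open G" "1 \<in> G" "G \<subseteq> U" using assms(1) by (rule unit_nhdsE)
  have "G \<subseteq> U * V"
  proof
    fix g assume "g \<in> G"
    then have "g * 1 \<in> U * V" using G(3) one_in_unit_nhds[OF assms(2)] by blast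
    then show "g \<in> U * V" by simp
  qed
  then show ?thesis using G unfolding unit_nhds_def by blast
qed

lemma open_vimage_mult_right:
  "open A \<Longrightarrow> open {u. u * x \<in> A}" for x :: "'a::topological_monoid_mult"
  using open_vimage[of A "\<lambda>u. u * x"] by (simp add: vimage_def continuous_intros)

lemma open_vimage_mult_left:
  "open A \<Longrightarrow> open {u. x * u \<in> A}" for x :: "'a::topological_monoid_mult"
  using open_vimage[of A "\<lambda>u. x * u"] by (simp add: vimage_def continuous_intros)

lemma tri_prod_mono: "U \<subseteq> U' \<Longrightarrow> V \<subseteq> V' \<Longrightarrow> tri_prod U x V \<subseteq> tri_prod U' x V'"
  unfolding tri_prod_def by blast

lemma self_in_tri_prod: "1 \<in> U \<Longrightarrow> 1 \<in> V \<Longrightarrow> x \<in> tri_prod U x V"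
  unfolding tri_prod_def by force

lemma image_central_shift_Times: "(\<lambda>(p, q). p * x * q) ` (U \<times> V) = tri_prod U x V"
  unfolding tri_prod_def by auto

lemma ball_q_LR_entourage: "ball_q x (LR_entourage U V) = tri_prod U x V"
  unfolding ball_q_def LR_entourage_def by auto

lemma LR_entourage_in_LR:
  "U \<in> unit_nhds \<Longrightarrow> V \<in> unit_nhds \<Longrightarrow> LR_entourage U V \<in> (LR :: ('a::topological_monoid_mult \<times> 'a) set set)"
  unfolding LR_def LR_base_def by blast

lemma LR_contains_open_entourage:
  assumes "E \<in> (LR :: ('a::topological_monoid_mult \<times> 'a) set set)"
  obtains G where "open G" "1 \<in> G" "LR_entourage G G \<subseteq> E"
proof -
  obtain U V where UV: "U \<in> unit_nhds" "V \<in> unit_nhds" "LR_entourage U V \<subseteq> E"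
    using assms unfolding LR_def LR_base_def by blast
  obtain G1 where G1: "open G1" "1 \<in> G1" "G1 \<subseteq> U" using UV(1) by (rule unit_nhdsE)
  obtain G2 where G2: "open G2" "1 \<in> G2" "G2 \<subseteq> V" using UV(2) by (rule unit_nhdsE)
  have "LR_entourage (G1 \<inter> G2) (G1 \<inter> G2) \<subseteq> LR_entourage U V"
    using G1 G2 unfolding LR_entourage_def tri_prod_def by blast
  with UV(3) G1 G2 show ?thesis using that[of "G1 \<inter> G2"] by blast
qed

lemma open_in_qu_topology_LR:
  fixes W :: "'a::topological_monoid_mult set"
  assumes "open W"
  shows "W \<in> qu_topology LR"
  unfolding qu_topology_def
proof (intro CollectI ballI)
  fix x assume "x \<in> W"
  have "open ((\<lambda>p::'a \<times> 'a. fst p * x * snd p) -` W)"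
    by (intro open_vimage[OF assms] continuous_intros)
  moreover have "(1, 1) \<in> (\<lambda>p::'a \<times> 'a. fst p * x * snd p) -` W" using \<open>x \<in> W\<close> by simp
  ultimately obtain A B where AB: "open A" "open B" "(1, 1) \<in> A \<times> B"
      "A \<times> B \<subseteq> (\<lambda>p. fst p * x * snd p) -` W"
    by (rule open_prod_elim)
  have "A \<in> unit_nhds" "B \<in> unit_nhds" using AB by (auto intro: unit_nhdsI)
  then have "LR_entourage A B \<in> LR" by (rule LR_entourage_in_LR)
  moreover have "ball_q x (LR_entourage A B) \<subseteq> W"
    using AB(4) unfolding ball_q_LR_entourage tri_prod_def by auto
  ultimately show "\<exists>E\<in>LR. ball_q x E \<subseteq> W" by blast
qed

lemma tri_prod_in_qu_topology_LR:
  fixes U V :: "'a::topological_monoid_mult set"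
  assumes "open U" "open V"
  shows "tri_prod U x V \<in> qu_topology LR"
  unfolding qu_topology_def
proof (intro CollectI ballI)
  fix y assume "y \<in> tri_prod U x V"
  then obtain a b where ab: "a \<in> U" "b \<in> V" "y = a * x * b" unfolding tri_prod_def by blast
  define U' where "U' = {u. u * a \<in> U}"
  define V' where "V' = {v. b * v \<in> V}"
  have "U' \<in> unit_nhds" "V' \<in> unit_nhds"
    unfolding U'_def V'_def using assms ab
    by (auto intro!: unit_nhdsI open_vimage_mult_right open_vimage_mult_left)
  then have "LR_entourage U' V' \<in> LR" by (rule LR_entourage_in_LR)
  moreover have "ball_q y (LR_entourage U' V') \<subseteq> tri_prod U x V"
  proof
    fix z assume "z \<in> ball_q y (LR_entourage U' V')"
    then obtain u v where uv: "u \<in> U'" "v \<in> V'" "z = u * y * v"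
      unfolding ball_q_LR_entourage tri_prod_def by blast
    have "z = (u * a) * x * (b * v)" using uv(3) ab(3) by (simp add: mult.assoc)
    then show "z \<in> tri_prod U x V" using uv unfolding U'_def V'_def tri_prod_def by blast
  qed
  ultimately show "\<exists>E\<in>LR. ball_q y E \<subseteq> tri_prod U x V" by blast
qed

lemma qu_topology_LR_subset_open:
  fixes S :: "'a::topological_monoid_mult itself"
  assumes "open_unit S" and "W \<in> qu_topology (LR :: ('a \<times> 'a) set set)"
  shows "open W"
  unfolding open_subopen[of W]
proof
  fix x assume "x \<in> W"
  then obtain E where E: "E \<in> (LR :: ('a \<times> 'a) set set)" "ball_q x E \<subseteq> W"
    using assms(2) unfolding qu_topology_def by blast
  obtain G where G: "open G" "1 \<in> G" "LR_entourage G G \<subseteq> E"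
    using E(1) by (rule LR_contains_open_entourage)
  have "tri_prod G x G \<subseteq> W"
    using G(3) E(2) unfolding ball_q_LR_entourage[symmetric] ball_q_def by blast
  moreover have "is_nhd (tri_prod G x G) x"
    using assms(1) G unit_nhdsI unfolding open_unit_def by blast
  ultimately show "\<exists>T. open T \<and> x \<in> T \<and> T \<subseteq> W" unfolding is_nhd_def by blast
qed

lemma open_unitI:
  fixes S :: "'a::topological_monoid_mult itself"
  assumes "\<And>G x. open G \<Longrightarrow> (1::'a) \<in> G \<Longrightarrow> open (tri_prod G x G)"
  shows "open_unit S"
  unfolding open_unit_def
proof (intro ballI allI)
  fix U :: "'a set" and x :: 'a
  assume "U \<in> unit_nhds"
  then obtain G where G: "open G" "1 \<in> G" "G \<subseteq> U" by (rule unit_nhdsE)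
  have "open (tri_prod G x G)" "x \<in> tri_prod G x G" "tri_prod G x G \<subseteq> tri_prod U x U"
    using assms G by (simp_all add: self_in_tri_prod tri_prod_mono)
  then show "is_nhd (tri_prod U x U) x" unfolding is_nhd_def by blast
qed

lemma qu_generates_topology_LR_iff_open_unit:
  fixes S :: "'a::topological_monoid_mult itself"
  shows "qu_generates_topology (LR :: ('a \<times> 'a) set set) \<longleftrightarrow> open_unit S"
proof
  assume "qu_generates_topology (LR :: ('a \<times> 'a) set set)"
  then show "open_unit S"
    using tri_prod_in_qu_topology_LR unfolding qu_generates_topology_def
    by (intro open_unitI) blast
next
  assume "open_unit S"
  then show "qu_generates_topology (LR :: ('a \<times> 'a) set set)"
    unfolding qu_generates_topology_def
    using open_in_qu_topology_LR qu_topology_LR_subset_open by blast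
qed

lemma open_unit_imp_open_central_shifts:
  fixes S :: "'a::topological_monoid_mult itself"
  assumes "open_unit S"
  shows "open_central_shifts S"
  unfolding open_central_shifts_def
proof (intro allI impI)
  fix a :: 'a and W :: "('a \<times> 'a) set"
  assume "open W"
  let ?f = "\<lambda>(x, y). x * a * y"
  show "open (?f ` W)"
    unfolding open_subopen[of "?f ` W"]
  proof
    fix z assume "z \<in> ?f ` W"
    then obtain x y where xy: "(x, y) \<in> W" "z = x * a * y" by auto
    obtain A B where AB: "open A" "open B" "(x, y) \<in> A \<times> B" "A \<times> B \<subseteq> W"
      using open_prod_elim[OF \<open>open W\<close> xy(1)] by blast
    define G where "G = {u. u * x \<in> A} \<inter> {v. y * v \<in> B}"
    have G: "open G" "1 \<in> G"
      unfolding G_def using AB by (auto intro: open_vimage_mult_right open_vimage_mult_left)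
    have "tri_prod G z G \<subseteq> ?f ` W"
    proof
      fix w assume "w \<in> tri_prod G z G"
      then obtain u v where uv: "u \<in> G" "v \<in> G" "w = u * z * v" unfolding tri_prod_def by blast
      have "w = ?f (u * x, y * v)" using uv(3) xy(2) by (simp add: mult.assoc)
      moreover have "(u * x, y * v) \<in> W" using uv AB(4) unfolding G_def by auto
      ultimately show "w \<in> ?f ` W" by blast
    qed
    moreover have "is_nhd (tri_prod G z G) z"
      using assms G unit_nhdsI unfolding open_unit_def by blast
    ultimately show "\<exists>T. open T \<and> z \<in> T \<and> T \<subseteq> ?f ` W" unfolding is_nhd_def by blast
  qed
qed

lemma open_central_shifts_imp_open_unit:
  fixes S :: "'a::topological_monoid_mult itself"
  assumes "open_central_shifts S"
  shows "open_unit S"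
proof (rule open_unitI)
  fix G :: "'a set" and x :: 'a
  assume "open G"
  then have "open ((\<lambda>(p, q). p * x * q) ` (G \<times> G))"
    using assms open_Times unfolding open_central_shifts_def by blast
  then show "open (tri_prod G x G)" by (simp only: image_central_shift_Times)
qed

lemma ent_comp_LR_entourage:
  fixes U V U' V' :: "'a::monoid_mult set"
  shows "ent_comp (LR_entourage U V) (LR_entourage U' V') = LR_entourage (U' * U) (V * V')"
proof (intro set_eqI iffI)
  fix p assume "p \<in> ent_comp (LR_entourage U V) (LR_entourage U' V')"
  then obtain x y z u v u' v' where
      uv: "p = (x, z)" "u \<in> U" "v \<in> V" "u' \<in> U'" "v' \<in> V'" "y = u * x * v" "z = u' * y * v'"
    unfolding ent_comp_def LR_entourage_def tri_prod_def by blast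
  then have "z = (u' * u) * x * (v * v')" by (simp add: mult.assoc)
  then show "p \<in> LR_entourage (U' * U) (V * V')"
    using uv unfolding LR_entourage_def tri_prod_def by blast
next
  fix p assume "p \<in> LR_entourage (U' * U) (V * V')"
  then obtain x z u v u' v' where
      uv: "p = (x, z)" "u \<in> U" "v \<in> V" "u' \<in> U'" "v' \<in> V'" "z = (u' * u) * x * (v * v')"
    unfolding LR_entourage_def tri_prod_def set_times_def by blast
  then have "u * x * v \<in> tri_prod U x V" "z \<in> tri_prod U' (u * x * v) V'"
    unfolding tri_prod_def by (auto simp: mult.assoc)
  then show "p \<in> ent_comp (LR_entourage U V) (LR_entourage U' V')"
    unfolding uv(1) ent_comp_def LR_entourage_def by blast
qed

lemma LR_base_ent_comp:
  assumes "E \<in> (LR_base :: ('a::topological_monoid_mult \<times> 'a) set set)" "F \<in> LR_base"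
  shows "ent_comp E F \<in> LR_base"
proof -
  obtain U V where "U \<in> unit_nhds" "V \<in> unit_nhds" "E = LR_entourage U V"
    using assms(1) unfolding LR_base_def by blast
  moreover obtain U' V' where "U' \<in> unit_nhds" "V' \<in> unit_nhds" "F = LR_entourage U' V'"
    using assms(2) unfolding LR_base_def by blast
  ultimately show ?thesis
    unfolding LR_base_def by (auto simp: ent_comp_LR_entourage intro: unit_nhds_times)
qed

lemma ball_set_q_closure_LR_base:
  assumes "E \<in> (LR_base :: ('a::topological_monoid_mult \<times> 'a) set set)" "F \<in> LR_base"
  shows "ball_set_q (closure A) E \<subseteq> closure (ball_set_q A (ent_comp F E))"
proof
  obtain U V where UV: "U \<in> unit_nhds" "V \<in> unit_nhds" "E = LR_entourage U V"
    using assms(1) unfolding LR_base_def by blast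
  obtain U' V' where UV': "U' \<in> unit_nhds" "V' \<in> unit_nhds" "F = LR_entourage U' V'"
    using assms(2) unfolding LR_base_def by blast
  fix z assume "z \<in> ball_set_q (closure A) E"
  then obtain a u v where auv: "a \<in> closure A" "u \<in> U" "v \<in> V" "z = u * a * v"
    unfolding ball_set_q_def UV(3) ball_q_LR_entourage tri_prod_def by blast
  let ?g = "\<lambda>t. u * t * v"
  have "?g ` A \<subseteq> ball_set_q A (ent_comp F E)"
  proof
    fix w assume "w \<in> ?g ` A"
    then obtain t where t: "t \<in> A" "w = (u * 1) * t * (1 * v)" by auto
    then have "w \<in> tri_prod (U * U') t (V' * V)"
      using auv one_in_unit_nhds[OF UV'(1)] one_in_unit_nhds[OF UV'(2)]
      unfolding tri_prod_def by blast
    then show "w \<in> ball_set_q A (ent_comp F E)"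
      using t(1) unfolding UV(3) UV'(3) ent_comp_LR_entourage ball_set_q_def ball_q_LR_entourage
      by blast
  qed
  then have "closure (?g ` A) \<subseteq> closure (ball_set_q A (ent_comp F E))" by (rule closure_mono)
  moreover have "?g ` closure A \<subseteq> closure (?g ` A)"
    by (intro continuous_image_closure_subset[of UNIV] continuous_intros) simp
  ultimately show "z \<in> closure (ball_set_q A (ent_comp F E))" using auv by blast
qed

lemma rotund_LR: "rotund (LR :: ('a::topological_monoid_mult \<times> 'a) set set)"
proof -
  have "is_qu_base LR_base (LR :: ('a \<times> 'a) set set)"
    unfolding is_qu_base_def LR_def by blast
  moreover have "rotund_base (LR_base :: ('a \<times> 'a) set set)"
    unfolding rotund_base_def using LR_base_ent_comp ball_set_q_closure_LR_base by blast
  ultimately show ?thesis unfolding rotund_def by blast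
qed

theorem proposition5p1:
  fixes S :: "'a::topological_monoid_mult itself"
  shows "(qu_generates_topology (LR :: ('a \<times> 'a) set set) \<longleftrightarrow> open_unit S)
       \<and> (open_unit S \<longleftrightarrow> open_central_shifts S)
       \<and> (open_unit S \<longrightarrow> rotund (LR :: ('a \<times> 'a) set set))"
  using qu_generates_topology_LR_iff_open_unit[of S] open_unit_imp_open_central_shifts[of S]
    open_central_shifts_imp_open_unit[of S] rotund_LR
  by blast

end
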